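(* Let $T\in\mathbb{N}$, $\alpha\in(0,1)$, $\delta\in(0,1)$, $\lambda=\sqrt T$, and let $\mathcal{H}=\{k/(H-1):k=0,\dots,H-1\}$ with $H\ge2$. Run the ExAUL algorithm (described in the context) with $\eta=2\gamma=\sqrt{\ln|\mathcal{H}|/T}$ against an adaptive adversary. Then, with probability at least $1-\delta$ over the learner's randomization, $$\frac1T\mathcal{R}_T^{\mathrm{FDR}}\le\frac{1-\mathrm{Ineff}_T}{\sqrt T}+\Big(1+\frac1{\sqrt T}\Big)\Big(4\sqrt{\frac{\ln|\mathcal{H}|}{T}}+\Big(\frac1T+\sqrt{\frac{1}{T\ln|\mathcal{H}|}}\Big)\ln\frac2\delta\Big).$$
   Context: Protocol. For $t=1,\dots,T$: an adaptive adversary chooses an input $\mathbf{x}_t$ (determining a score $f_t=f(\mathbf{x}_t,G(\mathbf{x}_t))\in[0,1)$ for a fixed generator $G$ and fixed scoring function $f$) and a feedback value $c_t\in[0,1]$ for the answer $G(\mathbf{x}_t)$; these may depend on the learner's past choices $\tau_1,\dots,\tau_{t-1}$ but not on $\tau_t$. The learner picks $\tau_t\in\mathcal{H}$; it answers $G(\mathbf{x}_t)$ if $f_t\ge\tau_t$ and outputs IDK otherwise; it observes $f_t$ and, as partial feedback, $e_t$, which equals $c_t$ when it answers (when it abstains, the losses below do not depend on $c_t$). Losses: for $\tau\in\mathcal{H}$, $a_t(\tau)=\mathbf{1}(f_t<\tau)$, $d_t(\tau,\alpha)=\mathbf{1}(f_t\ge\tau)c_t-\alpha\mathbf{1}(f_t\ge\tau)+\alpha$,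 $\ell_t(\tau)=\frac{a_t(\tau)+\lambda d_t(\tau,\alpha)}{1+\lambda}\in[0,1]$. ExAUL algorithm (parameters $\eta,\gamma>0$): $w_1(\tau)=1/|\mathcal{H}|$. At round $t$: $p_t(\tau)=w_t(\tau)/\sum_{\tau'}w_t(\tau')$; draw $\tau_t\sim p_t$; observe $f_t$ and $e_t$; define the unlocked set $\mathcal{H}_t(\tau')=\{\tau\in\mathcal{H}:\tau\le f_t\}$ if $f_t\ge\tau'$ and $\mathcal{H}_t(\tau')=\{\tau\in\mathcal{H}:\tau>f_t\}$ otherwise (for $\tau\in\mathcal{H}_t(\tau_t)$ the loss $\ell_t(\tau)$ is computable from $e_t$); set for all $\tau\in\mathcal{H}$ $$\tilde\ell_t(\tau)=\frac{\ell_t(\tau)\,\mathbf{1}(\tau\in\mathcal{H}_t(\tau_t))}{\gamma+\sum_{\bar\tau\in\mathcal{H}_t(\tau_t)}\mathbf{1}(\tau\in\mathcal{H}_t(\bar\tau))\,p_t(\bar\tau)};$$ update $w_{t+1}(\tau)\propto\exp(-\eta\sum_{s=1}^t\tilde\ell_s(\tau))$. Metrics: $\mathcal{R}_T^{\mathrm{FDR}}=\sum_{t=1}^T[\mathbf{1}(f_t\ge\tau_t)c_t-\alpha\mathbf{1}(f_t\ge\tau_t)]$ and $\mathrm{Ineff}_T=\frac1T\sum_{t=1}^T\mathbf{1}(f_t<\tau_t)$. *)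

theory Defs
  imports Complex_Main
begin

text \<open>Threshold grid: index k < N stands for the threshold k/(N-1);
  the grid is H = {k/(N-1) : k = 0..N-1}, |H| = N.\<close>
definition grid :: "nat \<Rightarrow> nat \<Rightarrow> real" where
  "grid N k = real k / real (N - 1)"

definition abst_loss :: "real \<Rightarrow> real \<Rightarrow> real" where
  "abst_loss f tau = (if f < tau then 1 else 0)"

definition fdr_loss :: "real \<Rightarrow> real \<Rightarrow> real \<Rightarrow> real \<Rightarrow> real" where
  "fdr_loss alpha f c tau =
     (if f \<ge> tau then 1 else 0) * c - alpha * (if f \<ge> tau then 1 else 0) + alpha"

definition tot_loss :: "real \<Rightarrow> real \<Rightarrow> real \<Rightarrow> real \<Rightarrow> real \<Rightarrow> real" where
  "tot_loss lam alpha f c tau = (abst_loss f tau + lam * fdr_loss alpha f c tau) / (1 + lam)"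

definition unlocked :: "nat \<Rightarrow> real \<Rightarrow> nat \<Rightarrow> nat set" where
  "unlocked N f k' =
     (if f \<ge> grid N k' then {k. k < N \<and> grid N k \<le> f}
      else {k. k < N \<and> grid N k > f})"

definition est_loss ::
  "nat \<Rightarrow> real \<Rightarrow> real \<Rightarrow> real \<Rightarrow> (nat \<Rightarrow> real) \<Rightarrow> real \<Rightarrow> real \<Rightarrow> nat \<Rightarrow> nat \<Rightarrow> real" where
  "est_loss N lam alpha gam p f c kt k =
     tot_loss lam alpha f c (grid N k) * (if k \<in> unlocked N f kt then 1 else 0) /
     (gam + (\<Sum>kb\<in>unlocked N f kt. (if k \<in> unlocked N f kb then 1 else 0) * p kb))"

definition expw :: "nat \<Rightarrow> real \<Rightarrow> (nat \<Rightarrow> real) \<Rightarrow> nat \<Rightarrow> real" where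
  "expw N eta L k = exp (- eta * L k) / (\<Sum>j<N. exp (- eta * L j))"

text \<open>Cumulative estimated losses after a (reversed) history of drawn indices.
  The adversary adv maps the list of the learner's past thresholds
  [tau_1,...,tau_(t-1)] to the pair (f_t, c_t).\<close>
fun cumloss_rev ::
  "nat \<Rightarrow> real \<Rightarrow> real \<Rightarrow> real \<Rightarrow> real \<Rightarrow> (real list \<Rightarrow> real \<times> real) \<Rightarrow> nat list \<Rightarrow> nat \<Rightarrow> real" where
  "cumloss_rev N lam alpha eta gam adv [] = (\<lambda>k. 0)"
| "cumloss_rev N lam alpha eta gam adv (x # rh) =
     (let L = cumloss_rev N lam alpha eta gam adv rh;
          p = expw N eta L;
          fc = adv (map (grid N) (rev rh))
      in (\<lambda>k. L k + est_loss N lam alpha gam p (fst fc) (snd fc) x k))"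

definition exaul_p ::
  "nat \<Rightarrow> real \<Rightarrow> real \<Rightarrow> real \<Rightarrow> real \<Rightarrow> (real list \<Rightarrow> real \<times> real) \<Rightarrow> nat list \<Rightarrow> nat \<Rightarrow> real" where
  "exaul_p N lam alpha eta gam adv hs = expw N eta (cumloss_rev N lam alpha eta gam adv (rev hs))"

definition exaul_prob ::
  "nat \<Rightarrow> real \<Rightarrow> real \<Rightarrow> real \<Rightarrow> real \<Rightarrow> (real list \<Rightarrow> real \<times> real) \<Rightarrow> nat \<Rightarrow> (nat list \<Rightarrow> bool) \<Rightarrow> real" where
  "exaul_prob N lam alpha eta gam adv T E =
     (\<Sum>hs\<in>{hs. length hs = T \<and> set hs \<subseteq> {..<N}}.
        (\<Prod>t<T. exaul_p N lam alpha eta gam adv (take t hs) (hs ! t)) * (if E hs then 1 else 0))"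

definition fdr_regret :: "nat \<Rightarrow> real \<Rightarrow> (real list \<Rightarrow> real \<times> real) \<Rightarrow> nat list \<Rightarrow> real" where
  "fdr_regret N alpha adv hs =
     (\<Sum>t<length hs. let fc = adv (map (grid N) (take t hs)); ans = fst fc \<ge> grid N (hs ! t) in
        (if ans then 1 else 0) * snd fc - alpha * (if ans then 1 else 0))"

definition ineff :: "nat \<Rightarrow> (real list \<Rightarrow> real \<times> real) \<Rightarrow> nat list \<Rightarrow> real" where
  "ineff N adv hs =
     (\<Sum>t<length hs. if fst (adv (map (grid N) (take t hs))) < grid N (hs ! t) then 1 else 0)
     / real (length hs)"

end

theory Submission
  imports Defs
begin

text \<open>
  ExAUL is exponential weights over the threshold grid with implicit-exploration loss
  estimates, where playing a threshold reveals the loss of every threshold on the same side of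
  the score. The log-sum-exp potential bounds the learner's cumulative loss by \<open>ln N / \<eta>\<close>,
  plus the cumulative estimated loss of any comparator, plus a per-round overhead
  \<open>2\<gamma>\<ell> / (\<gamma> + P)\<close>, \<open>P\<close> being the probability of the unlocked set. The events that the
  comparator's cumulative estimated loss exceeds its true loss by more than \<open>c / \<eta>\<close>, and that
  the total overhead exceeds \<open>4\<gamma>T + c\<close>, have probability at most \<open>exp (- c)\<close> each, because
  both deviations are exponential supermartingales.
  For the comparator threshold 1, which always abstains, \<open>(1 + \<lambda>)\<close> times the loss regret is
  \<open>\<lambda>\<close> times the FDR regret minus the number of answered rounds.
\<close>

section \<open>Elementary inequalities\<close>

lemma exp_div_le_add_one:
  fixes x :: real
  assumes "0 \<le> x"
  shows "exp (2 * x / (2 + x)) \<le> 1 + x"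
proof -
  let ?g = "\<lambda>y::real. ln (1 + y) - 2 * y / (2 + y)"
  have "?g 0 \<le> ?g x"
  proof (rule DERIV_nonneg_imp_nondecreasing[OF assms])
    fix y :: real
    assume y: "0 \<le> y" "y \<le> x"
    have "(?g has_real_derivative (1 / (1 + y) - 4 / (2 + y)^2)) (at y)"
      using y by (auto intro!: derivative_eq_intros simp: field_simps power2_eq_square)
    moreover have "4 / (2 + y)^2 \<le> 1 / (1 + y)"
    proof -
      have "4 * (1 + y) \<le> (2 + y)^2" by (simp add: power2_eq_square algebra_simps)
      then show ?thesis using y by (simp add: divide_simps)
    qed
    ultimately show "\<exists>d. (?g has_real_derivative d) (at y) \<and> 0 \<le> d"
      by force
  qed
  then have "2 * x / (2 + x) \<le> ln (1 + x)" by simp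
  then show ?thesis
    using assms by (metis exp_le_cancel_iff exp_ln add_pos_nonneg zero_less_one)
qed

lemma exp_minus_le_quadratic:
  fixes z :: real
  assumes "0 \<le> z"
  shows "exp (- z) \<le> 1 - z + z^2 / 2"
proof -
  let ?g = "\<lambda>y::real. 1 - y + y^2 / 2 - exp (- y)"
  have "?g 0 \<le> ?g z"
  proof (rule DERIV_nonneg_imp_nondecreasing[OF assms])
    fix y :: real
    have "(?g has_real_derivative (y - 1 + exp (- y))) (at y)"
      by (auto intro!: derivative_eq_intros simp: power2_eq_square)
    moreover have "0 \<le> y - 1 + exp (- y)" using exp_minus_ge[of y] by simp
    ultimately show "\<exists>d. (?g has_real_derivative d) (at y) \<and> 0 \<le> d"
      by blast
  qed
  then show ?thesis by simp
qed

lemma mult_exp_div_le: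
  fixes Q x gam :: real
  assumes "0 \<le> Q" "0 \<le> x" "x \<le> 2 * gam" "0 < gam"
  shows "Q * exp (x / (gam + Q)) \<le> Q + x"
proof (cases "Q = 0")
  case False
  then have Q: "0 < Q" using assms by simp
  have "x / (gam + Q) \<le> 2 * (x / Q) / (2 + x / Q)"
  proof -
    have "x * x \<le> x * (2 * gam)" using assms by (intro mult_left_mono) auto
    then show ?thesis using assms Q by (simp add: divide_simps) (simp add: algebra_simps)
  qed
  also have "exp (2 * (x / Q) / (2 + x / Q)) \<le> 1 + x / Q"
    using assms Q by (intro exp_div_le_add_one) simp
  finally have "Q * exp (x / (gam + Q)) \<le> Q * (1 + x / Q)"
    using Q by simp
  then show ?thesis using Q by (simp add: algebra_simps)
qed (simp add: assms)

lemma mix_exp_le_exp: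
  fixes Q a gam :: real
  defines "z \<equiv> 2 * gam * a / (gam + Q)"
  assumes "0 < Q" "Q \<le> 1" "0 \<le> a" "a \<le> 1" "0 < gam"
  shows "1 - Q + Q * exp (- z) \<le> exp (- (2 * gam * a) + 2 * gam * z)"
proof -
  have z: "0 \<le> z" using assms by (simp add: z_def)
  have Qz: "Q * z = 2 * gam * a - gam * z" using assms by (simp add: z_def field_simps)
  have "Q * a \<le> gam + Q" using assms mult_left_le[of a Q] by linarith
  then have "Q * z \<le> 2 * gam"
    using assms by (simp add: z_def divide_simps)
  then have Qzz: "Q * z^2 / 2 \<le> gam * z"
    using z mult_right_mono[of "Q * z" "2 * gam" z] by (simp add: power2_eq_square)
  have "1 - Q + Q * exp (- z) \<le> 1 - Q + Q * (1 - z + z^2 / 2)"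
    using exp_minus_le_quadratic[OF z] assms by simp
  also have "\<dots> \<le> 1 + (- (2 * gam * a) + 2 * gam * z)"
    using Qz Qzz by (simp add: algebra_simps)
  also have "\<dots> \<le> exp (- (2 * gam * a) + 2 * gam * z)"
    by (rule exp_ge_add_one_self)
  finally show ?thesis .
qed

lemma sum_mult_if_mem:
  fixes p :: "nat \<Rightarrow> real"
  assumes "U \<subseteq> {..<N}"
  shows "(\<Sum>i<N. p i * (if i \<in> U then a else b))
    = a * sum p U + b * (sum p {..<N} - sum p U)"
proof -
  have "(\<Sum>i<N. p i * (if i \<in> U then a else b))
      = (\<Sum>i\<in>U. p i * a) + (\<Sum>i\<in>{..<N} - U. p i * b)"
    using sum.subset_diff[OF assms, of "\<lambda>i. p i * (if i \<in> U then a else b)"] assms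
    by (simp add: Int_absorb1)
  also have "\<dots> = a * sum p U + b * (sum p {..<N} - sum p U)"
    using sum_diff[OF _ assms, of p]
    by (simp add: sum_distrib_left[symmetric] sum_distrib_right[symmetric] mult.commute)
  finally show ?thesis .
qed

lemma tot_loss_eq:
  "tot_loss lam alpha f c tau
    = (if tau \<le> f then lam * c / (1 + lam) else (1 + lam * alpha) / (1 + lam))"
  by (simp add: tot_loss_def abst_loss_def fdr_loss_def)

lemma tot_loss_bounds:
  assumes "0 \<le> lam" "0 \<le> alpha" "alpha \<le> 1" "0 \<le> c" "c \<le> 1"
  shows "0 \<le> tot_loss lam alpha f c tau" "tot_loss lam alpha f c tau \<le> 1"
proof -
  have "lam * c \<le> 1 + lam" "lam * alpha \<le> lam"
    using assms mult_left_le[of c lam] mult_left_le[of alpha lam] by linarith+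
  then show "0 \<le> tot_loss lam alpha f c tau" "tot_loss lam alpha f c tau \<le> 1"
    using assms by (auto simp: tot_loss_eq)
qed

lemma unlocked_subset: "unlocked N f k \<subseteq> {..<N}"
  by (auto simp: unlocked_def)

lemma self_mem_unlocked: "k < N \<Longrightarrow> k \<in> unlocked N f k"
  by (auto simp: unlocked_def)

lemma unlocked_eq_if_mem: "k' \<in> unlocked N f k \<Longrightarrow> unlocked N f k' = unlocked N f k"
  by (auto simp: unlocked_def split: if_splits)

lemma mem_unlocked_commute:
  "k < N \<Longrightarrow> j < N \<Longrightarrow> j \<in> unlocked N f k \<longleftrightarrow> k \<in> unlocked N f j"
  by (auto simp: unlocked_def)

lemma tot_loss_eq_if_mem_unlocked:
  "k' \<in> unlocked N f k
    \<Longrightarrow> tot_loss lam alpha f c (grid N k') = tot_loss lam alpha f c (grid N k)"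
  by (auto simp: unlocked_def tot_loss_eq split: if_splits)

lemma sum_exp_pos: "0 < N \<Longrightarrow> 0 < (\<Sum>j<(N::nat). exp (g j :: real))"
  by (rule sum_pos) auto

lemma expw_pos: "0 < N \<Longrightarrow> 0 < expw N eta L k"
  by (simp add: expw_def sum_exp_pos)

lemma sum_expw: "0 < N \<Longrightarrow> (\<Sum>k<N. expw N eta L k) = 1"
proof -
  assume "0 < N"
  then have "0 < (\<Sum>j<N. exp (- eta * L j))" by (rule sum_exp_pos)
  then show ?thesis by (simp add: expw_def sum_divide_distrib[symmetric])
qed

section \<open>One round of ExAUL\<close>

locale exaul_round =
  fixes N :: nat and p :: "nat \<Rightarrow> real" and f c lam alpha gam :: real
  assumes p_pos: "\<And>k. k < N \<Longrightarrow> 0 < p k" and sum_p: "(\<Sum>k<N. p k) = 1"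
    and f_less_one: "f < 1"
    and c_nonneg: "0 \<le> c" and c_le_one: "c \<le> 1"
    and lam_nonneg: "0 \<le> lam" and alpha_nonneg: "0 \<le> alpha" and alpha_le_one: "alpha \<le> 1"
    and gam_pos: "0 < gam"
begin

abbreviation ell :: "nat \<Rightarrow> real" where
  "ell k \<equiv> tot_loss lam alpha f c (grid N k)"

abbreviation mass :: "nat \<Rightarrow> real" where
  "mass k \<equiv> \<Sum>kb\<in>unlocked N f k. p kb"

abbreviation overhead :: "nat \<Rightarrow> real" where
  "overhead k \<equiv> 2 * gam * ell k / (gam + mass k)"

lemma N_pos: "0 < N"
  using sum_p by (cases N) auto

lemma p_nonneg: "k < N \<Longrightarrow> 0 \<le> p k"
  using p_pos less_imp_le by blast

lemma ell_bounds: "0 \<le> ell k" "ell k \<le> 1"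
  using tot_loss_bounds[OF lam_nonneg alpha_nonneg alpha_le_one c_nonneg c_le_one] by auto

lemma mass_bounds:
  assumes "k < N"
  shows "0 < mass k" "mass k \<le> 1"
proof -
  have "p k \<le> mass k"
    using p_nonneg unlocked_subset[of N f k] self_mem_unlocked[OF assms]
    by (intro member_le_sum finite_subset[OF unlocked_subset]) auto
  then show "0 < mass k" using p_pos[OF assms] by linarith
  have "mass k \<le> (\<Sum>k<N. p k)"
    using p_nonneg unlocked_subset[of N f k] by (intro sum_mono2) auto
  then show "mass k \<le> 1" using sum_p by simp
qed

lemma est_loss_eq:
  assumes "kt < N"
  shows "est_loss N lam alpha gam p f c kt i =
    (if i \<in> unlocked N f kt then ell kt / (gam + mass kt) else 0)"
proof (cases "i \<in> unlocked N f kt")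
  case True
  have "(\<Sum>kb\<in>unlocked N f kt. (if i \<in> unlocked N f kb then 1 else 0) * p kb) = mass kt"
    using True unlocked_eq_if_mem by (intro sum.cong) auto
  then show ?thesis
    using True tot_loss_eq_if_mem_unlocked[OF True] by (simp add: est_loss_def)
qed (simp add: est_loss_def)

lemma log_weight_step:
  assumes p_eq: "p = expw N eta L" and eta: "eta = 2 * gam" and kt: "kt < N"
  shows "ln (\<Sum>i<N. exp (- eta * (L i + est_loss N lam alpha gam p f c kt i)))
     \<le> ln (\<Sum>i<N. exp (- eta * L i)) - eta * ell kt + eta * overhead kt"
proof -
  define W where "W = (\<Sum>i<N. exp (- eta * L i))"
  define z where "z = overhead kt"
  have W: "0 < W" using N_pos by (simp add: W_def sum_exp_pos)
  have p_W: "p i = exp (- eta * L i) / W" for i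
    by (simp add: p_eq expw_def W_def)
  have "exp (- eta * (L i + est_loss N lam alpha gam p f c kt i))
      = W * (p i * (if i \<in> unlocked N f kt then exp (- z) else 1))" for i
  proof -
    have "- eta * (L i + est_loss N lam alpha gam p f c kt i)
        = - eta * L i + (if i \<in> unlocked N f kt then - z else 0)"
      by (simp add: est_loss_eq[OF kt] eta z_def algebra_simps)
    then show ?thesis
      using W by (cases "i \<in> unlocked N f kt") (simp_all add: p_W mult_exp_exp)
  qed
  then have "(\<Sum>i<N. exp (- eta * (L i + est_loss N lam alpha gam p f c kt i)))
      = W * (1 - mass kt + mass kt * exp (- z))"
    by (simp add: sum_distrib_left[symmetric] sum_mult_if_mem[OF unlocked_subset] sum_p
        algebra_simps)
  moreover have pos: "0 < 1 - mass kt + mass kt * exp (- z)"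
    using mass_bounds[OF kt] by (smt (verit) exp_gt_zero mult_pos_pos)
  moreover have "ln (1 - mass kt + mass kt * exp (- z)) \<le> - eta * ell kt + eta * z"
  proof -
    have "1 - mass kt + mass kt * exp (- z) \<le> exp (- eta * ell kt + eta * z)"
      using mix_exp_le_exp[of "mass kt" "ell kt" gam] mass_bounds[OF kt] ell_bounds gam_pos
      by (simp add: z_def eta)
    then show ?thesis using pos by (metis ln_exp ln_le_cancel_iff exp_gt_zero)
  qed
  ultimately show ?thesis
    using W by (simp add: ln_mult z_def W_def)
qed

lemma est_loss_exp_moment:
  assumes j: "j < N"
  shows "(\<Sum>k<N. p k * exp (2 * gam * (est_loss N lam alpha gam p f c k j - ell j))) \<le> 1"
proof -
  define Q where "Q = mass j"
  define x where "x = 2 * gam * ell j"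
  have "exp (2 * gam * (est_loss N lam alpha gam p f c k j - ell j))
      = (if k \<in> unlocked N f j then exp (x / (gam + Q)) * exp (- x) else exp (- x))"
    if k: "k < N" for k
  proof (cases "k \<in> unlocked N f j")
    case True
    then have "j \<in> unlocked N f k" "mass k = Q" "ell k = ell j"
      using mem_unlocked_commute[OF k j] unlocked_eq_if_mem[OF True]
        tot_loss_eq_if_mem_unlocked[OF True] by (auto simp: Q_def)
    then show ?thesis
      using True k by (simp add: est_loss_eq x_def right_diff_distrib mult_exp_exp)
  next
    case False
    then have "j \<notin> unlocked N f k" using mem_unlocked_commute[OF k j] by simp
    then show ?thesis using False k by (simp add: est_loss_eq x_def)
  qed
  then have "(\<Sum>k<N. p k * exp (2 * gam * (est_loss N lam alpha gam p f c k j - ell j)))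
      = exp (- x) * (Q * exp (x / (gam + Q)) + (1 - Q))"
    by (simp add: sum_mult_if_mem[OF unlocked_subset] sum_p Q_def algebra_simps)
  also have "\<dots> \<le> exp (- x) * (1 + x)"
    using mult_exp_div_le[of Q x gam] mass_bounds[OF j] ell_bounds[of j] gam_pos
    by (simp add: Q_def x_def mult_left_le)
  also have "\<dots> \<le> exp (- x) * exp x"
    by (intro mult_left_mono) auto
  finally show ?thesis by (simp add: mult_exp_exp)
qed

lemma overhead_exp_moment: "(\<Sum>k<N. p k * exp (overhead k - 4 * gam)) \<le> 1"
proof -
  \<comment> \<open>There are only two unlocked sets, \<open>A\<close> and its complement, and loss and mass are
    constant on each of them.\<close>
  define A where "A = {k. k < N \<and> grid N k \<le> f}"
  define eA where "eA = lam * c / (1 + lam)"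
  define eB where "eB = (1 + lam * alpha) / (1 + lam)"
  define PA where "PA = sum p A"
  define PB where "PB = sum p ({..<N} - A)"
  have A: "A \<subseteq> {..<N}" by (auto simp: A_def)
  have PB: "PB = 1 - PA" using sum_diff[OF _ A, of p] sum_p by (simp add: PA_def PB_def)
  have PA_PB_nonneg: "0 \<le> PA" "0 \<le> PB"
    using A p_nonneg by (auto simp: PA_def PB_def intro!: sum_nonneg)
  have "eA = tot_loss lam alpha f c f" "eB = tot_loss lam alpha f c 1"
    using f_less_one by (simp_all add: eA_def eB_def tot_loss_eq)
  then have eAB: "0 \<le> eA" "eA \<le> 1" "0 \<le> eB" "eB \<le> 1"
    using tot_loss_bounds[OF lam_nonneg alpha_nonneg alpha_le_one c_nonneg c_le_one] by simp_all
  let ?XA = "exp (2 * gam * eA / (gam + PA))" and ?XB = "exp (2 * gam * eB / (gam + PB))"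
  have per_class: "p k * exp (overhead k - 4 * gam)
      = exp (- 4 * gam) * (p k * (if k \<in> A then ?XA else ?XB))" if "k < N" for k
    using that by (auto simp: unlocked_def A_def PA_def PB_def eA_def eB_def tot_loss_eq
        exp_diff exp_minus divide_inverse set_diff_eq intro!: arg_cong[where f = "sum p"])
  have "(\<Sum>k<N. p k * exp (overhead k - 4 * gam))
      = exp (- 4 * gam) * (\<Sum>k<N. p k * (if k \<in> A then ?XA else ?XB))"
    unfolding sum_distrib_left using per_class by (intro sum.cong) auto
  also have "\<dots> = exp (- 4 * gam) * (PA * ?XA + PB * ?XB)"
    by (simp add: sum_mult_if_mem[OF A] sum_p PB flip: PA_def)
  also have "\<dots> \<le> exp (- 4 * gam) * ((PA + 2 * gam * eA) + (PB + 2 * gam * eB))"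
    using mult_exp_div_le[of PA "2 * gam * eA" gam] mult_exp_div_le[of PB "2 * gam * eB" gam]
      PA_PB_nonneg eAB gam_pos
    by (intro mult_left_mono add_mono) auto
  also have "\<dots> \<le> exp (- 4 * gam) * (1 + 4 * gam)"
  proof -
    have "2 * gam * eA \<le> 2 * gam" "2 * gam * eB \<le> 2 * gam"
      using eAB gam_pos by (simp_all add: mult_left_le)
    then show ?thesis using PB by (intro mult_left_mono) auto
  qed
  also have "\<dots> \<le> exp (- 4 * gam) * exp (4 * gam)"
    by (intro mult_left_mono) auto
  finally show ?thesis by (simp add: mult_exp_exp)
qed

end

section \<open>Expectations over sampled histories\<close>

fun seq_expect ::
  "nat \<Rightarrow> (nat list \<Rightarrow> nat \<Rightarrow> real) \<Rightarrow> nat \<Rightarrow> nat list \<Rightarrow> (nat list \<Rightarrow> real) \<Rightarrow> real"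
  where
    "seq_expect N P 0 h F = F h"
  | "seq_expect N P (Suc n) h F = (\<Sum>k<N. P h k * seq_expect N P n (h @ [k]) F)"

lemma lists_length_Suc_eq:
  "{ys. length ys = Suc n \<and> set ys \<subseteq> A}
    = (\<lambda>(k, ys). k # ys) ` (A \<times> {ys. length ys = n \<and> set ys \<subseteq> A})"
  by (auto simp: length_Suc_conv image_iff)

lemma sum_lists_eq_seq_expect:
  "(\<Sum>ys\<in>{ys. length ys = n \<and> set ys \<subseteq> {..<N}}.
      (\<Prod>t<n. P (h @ take t ys) (ys ! t)) * F (h @ ys)) = seq_expect N P n h F"
proof (induction n arbitrary: h)
  case 0
  have "{ys. length ys = 0 \<and> set ys \<subseteq> {..<N}} = {[]}" by auto
  then show ?case by simp
next
  case (Suc n)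
  let ?Ln = "{ys. length ys = n \<and> set ys \<subseteq> {..<N}}"
  have inj: "inj_on (\<lambda>(k, ys). k # ys) ({..<N} \<times> ?Ln)"
    by (auto simp: inj_on_def)
  have "(\<Sum>ys\<in>{ys. length ys = Suc n \<and> set ys \<subseteq> {..<N}}.
          (\<Prod>t<Suc n. P (h @ take t ys) (ys ! t)) * F (h @ ys))
     = (\<Sum>k<N. \<Sum>ys\<in>?Ln.
          (\<Prod>t<Suc n. P (h @ take t (k # ys)) ((k # ys) ! t)) * F (h @ k # ys))"
    unfolding lists_length_Suc_eq sum.cartesian_product
    by (subst sum.reindex[OF inj]) (simp add: case_prod_unfold)
  also have "\<dots> = (\<Sum>k<N. P h k *
      (\<Sum>ys\<in>?Ln. (\<Prod>t<n. P ((h @ [k]) @ take t ys) (ys ! t)) * F ((h @ [k]) @ ys)))"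
    by (simp only: prod.lessThan_Suc_shift) (simp add: sum_distrib_left mult.assoc)
  finally show ?case by (simp only: Suc.IH seq_expect.simps)
qed

lemma exaul_prob_eq_seq_expect:
  "exaul_prob N lam alpha eta gam adv T E
    = seq_expect N (exaul_p N lam alpha eta gam adv) T [] (\<lambda>hs. if E hs then 1 else 0)"
  using sum_lists_eq_seq_expect[where h = "[]"] by (simp add: exaul_prob_def)

definition exp_supermartingale ::
  "nat \<Rightarrow> (nat list \<Rightarrow> nat \<Rightarrow> real) \<Rightarrow> (nat list \<Rightarrow> real) \<Rightarrow> bool" where
  "exp_supermartingale N P S \<longleftrightarrow>
     (\<forall>h. set h \<subseteq> {..<N} \<longrightarrow> (\<Sum>k<N. P h k * exp (S (h @ [k]) - S h)) \<le> 1)"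

locale sampling_kernel =
  fixes N :: nat and P :: "nat list \<Rightarrow> nat \<Rightarrow> real"
  assumes P_nonneg: "\<And>h k. k < N \<Longrightarrow> 0 \<le> P h k"
    and sum_P: "\<And>h. (\<Sum>k<N. P h k) = 1"
begin

lemma seq_expect_const: "seq_expect N P n h (\<lambda>_. c) = c"
  by (induction n arbitrary: h) (simp_all add: sum_distrib_right[symmetric] sum_P)

lemma seq_expect_diff:
  "seq_expect N P n h (\<lambda>x. F x - G x) = seq_expect N P n h F - seq_expect N P n h G"
  by (induction n arbitrary: h) (simp_all add: right_diff_distrib sum_subtractf)

lemma seq_expect_cmult: "seq_expect N P n h (\<lambda>x. c * F x) = c * seq_expect N P n h F"
  by (induction n arbitrary: h) (simp_all add: sum_distrib_left algebra_simps)

lemma seq_expect_mono: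
  assumes "\<And>hs. set hs \<subseteq> {..<N} \<Longrightarrow> length hs = length h + n \<Longrightarrow> F hs \<le> G hs"
    and "set h \<subseteq> {..<N}"
  shows "seq_expect N P n h F \<le> seq_expect N P n h G"
  using assms
proof (induction n arbitrary: h)
  case (Suc n)
  have "seq_expect N P n (h @ [k]) F \<le> seq_expect N P n (h @ [k]) G" if "k < N" for k
    using Suc.prems that by (intro Suc.IH) auto
  then show ?case by (auto intro!: sum_mono mult_left_mono P_nonneg)
qed simp

lemma seq_expect_exp_le:
  assumes "exp_supermartingale N P S" and "set h \<subseteq> {..<N}"
  shows "seq_expect N P n h (\<lambda>hs. exp (S hs)) \<le> exp (S h)"
  using assms(2)
proof (induction n arbitrary: h)
  case (Suc n)
  have "seq_expect N P (Suc n) h (\<lambda>hs. exp (S hs)) \<le> (\<Sum>k<N. P h k * exp (S (h @ [k])))"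
    using Suc by (auto intro!: sum_mono mult_left_mono P_nonneg)
  also have "\<dots> = exp (S h) * (\<Sum>k<N. P h k * exp (S (h @ [k]) - S h))"
    by (simp add: sum_distrib_left exp_diff field_simps)
  also have "\<dots> \<le> exp (S h)"
    using assms(1) Suc.prems by (simp add: exp_supermartingale_def)
  finally show ?case .
qed simp

lemma seq_expect_markov:
  assumes "exp_supermartingale N P S" and "S [] = 0"
  shows "seq_expect N P n [] (\<lambda>hs. if c < S hs then 1 else 0) \<le> exp (- c)"
proof -
  have "seq_expect N P n [] (\<lambda>hs. if c < S hs then 1 else 0)
      \<le> seq_expect N P n [] (\<lambda>hs. exp (- c) * exp (S hs))"
    by (intro seq_expect_mono) (auto simp flip: exp_add)
  also have "\<dots> \<le> exp (- c) * exp (S [])"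
    unfolding seq_expect_cmult by (intro mult_left_mono seq_expect_exp_le assms) auto
  finally show ?thesis using assms(2) by simp
qed

lemma seq_expect_indicator_ge_union_bound:
  assumes "exp_supermartingale N P S1" "exp_supermartingale N P S2" "S1 [] = 0" "S2 [] = 0"
    and "\<And>hs. set hs \<subseteq> {..<N} \<Longrightarrow> length hs = n \<Longrightarrow> S1 hs \<le> c \<Longrightarrow> S2 hs \<le> c \<Longrightarrow> E hs"
  shows "1 - 2 * exp (- c) \<le> seq_expect N P n [] (\<lambda>hs. if E hs then 1 else 0)"
proof -
  define I1 where "I1 = (\<lambda>hs. if c < S1 hs then 1 else (0::real))"
  define I2 where "I2 = (\<lambda>hs. if c < S2 hs then 1 else (0::real))"
  have "1 - seq_expect N P n [] I1 - seq_expect N P n [] I2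
      = seq_expect N P n [] (\<lambda>hs. 1 - I1 hs - I2 hs)"
    by (simp add: seq_expect_diff seq_expect_const)
  also have "\<dots> \<le> seq_expect N P n [] (\<lambda>hs. if E hs then 1 else 0)"
    using assms(5) by (intro seq_expect_mono) (auto simp: I1_def I2_def not_less)
  finally show ?thesis
    using seq_expect_markov[OF assms(1,3), of n c] seq_expect_markov[OF assms(2,4), of n c]
    by (simp add: I1_def I2_def)
qed

end

section \<open>Runs of ExAUL\<close>

definition path_sum :: "(nat list \<Rightarrow> nat \<Rightarrow> real) \<Rightarrow> nat list \<Rightarrow> real" where
  "path_sum g hs = (\<Sum>t<length hs. g (take t hs) (hs ! t))"

lemma path_sum_Nil [simp]: "path_sum g [] = 0"
  by (simp add: path_sum_def)

lemma path_sum_snoc [simp]: "path_sum g (h @ [k]) = path_sum g h + g h k"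
  by (simp add: path_sum_def nth_append)

lemma grid_last: "2 \<le> N \<Longrightarrow> grid N (N - 1) = 1"
  by (simp add: grid_def)

lemma tot_loss_minus_abstain:
  assumes "f < 1" "0 \<le> lam"
  shows "(1 + lam) * (tot_loss lam alpha f c tau - tot_loss lam alpha f c 1)
    = abst_loss f tau - 1
      + lam * ((if f \<ge> tau then 1 else 0) * c - alpha * (if f \<ge> tau then 1 else 0))"
proof -
  have expand:
    "(1 + lam) * tot_loss lam alpha f c tau' = abst_loss f tau' + lam * fdr_loss alpha f c tau'"
    for tau'
    using assms by (simp add: tot_loss_def)
  show ?thesis
    unfolding right_diff_distrib expand
    using assms by (simp add: abst_loss_def fdr_loss_def algebra_simps)
qed

lemma learning_rate_eqs:
  fixes L T :: real
  assumes "0 < L" "0 < T"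
  shows "L / sqrt (L / T) = sqrt (L / T) * T" "1 / sqrt (L / T) = T * sqrt (1 / (T * L))"
proof -
  have "(sqrt (L / T))^2 = L / T" using assms by simp
  then show "L / sqrt (L / T) = sqrt (L / T) * T"
    using assms by (simp add: field_simps power2_eq_square)
  have "sqrt (L / T) * sqrt (1 / (T * L)) = sqrt ((1 / T)^2)"
    using assms by (simp add: field_simps power2_eq_square flip: real_sqrt_mult)
  also have "\<dots> = 1 / T"
    using assms by simp
  finally show "1 / sqrt (L / T) = T * sqrt (1 / (T * L))"
    using assms by (simp add: field_simps)
qed

locale exaul_run =
  fixes N :: nat and lam alpha eta gam :: real and adv :: "real list \<Rightarrow> real \<times> real"
  assumes N_ge_2: "2 \<le> N" and lam_nonneg: "0 \<le> lam"
    and alpha_nonneg: "0 \<le> alpha" and alpha_le_one: "alpha \<le> 1"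
    and eta_eq: "eta = 2 * gam" and gam_pos: "0 < gam"
    and score_range: "\<And>hs. 0 \<le> fst (adv hs) \<and> fst (adv hs) < 1"
    and feedback_range: "\<And>hs. 0 \<le> snd (adv hs) \<and> snd (adv hs) \<le> 1"
begin

abbreviation p :: "nat list \<Rightarrow> nat \<Rightarrow> real" where
  "p h \<equiv> exaul_p N lam alpha eta gam adv h"

abbreviation score :: "nat list \<Rightarrow> real" where
  "score h \<equiv> fst (adv (map (grid N) h))"

abbreviation feedback :: "nat list \<Rightarrow> real" where
  "feedback h \<equiv> snd (adv (map (grid N) h))"

abbreviation loss :: "nat list \<Rightarrow> nat \<Rightarrow> real" where
  "loss h k \<equiv> tot_loss lam alpha (score h) (feedback h) (grid N k)"

abbreviation est :: "nat list \<Rightarrow> nat \<Rightarrow> nat \<Rightarrow> real" where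
  "est h k i \<equiv> est_loss N lam alpha gam (p h) (score h) (feedback h) k i"

abbreviation overhead :: "nat list \<Rightarrow> nat \<Rightarrow> real" where
  "overhead h k \<equiv> 2 * gam * loss h k / (gam + (\<Sum>kb\<in>unlocked N (score h) k. p h kb))"

definition cum_est :: "nat list \<Rightarrow> nat \<Rightarrow> real" where
  "cum_est h = cumloss_rev N lam alpha eta gam adv (rev h)"

definition potential :: "nat list \<Rightarrow> real" where
  "potential h = ln (\<Sum>i<N. exp (- eta * cum_est h i))"

lemma eta_pos: "0 < eta"
  using eta_eq gam_pos by simp

lemma p_eq: "p h = expw N eta (cum_est h)"
  by (simp add: exaul_p_def cum_est_def)

lemma round_at: "exaul_round N (p h) (score h) (feedback h) lam alpha gam"
  unfolding exaul_round_def p_eq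
  using N_ge_2 expw_pos sum_expw score_range feedback_range lam_nonneg alpha_nonneg
    alpha_le_one gam_pos
  by auto

lemma sampling_kernel: "sampling_kernel N p"
  unfolding sampling_kernel_def p_eq
  using N_ge_2 expw_pos sum_expw by (auto intro: less_imp_le)

lemma cum_est_snoc: "cum_est (h @ [k]) = (\<lambda>i. cum_est h i + est h k i)"
  by (simp add: cum_est_def exaul_p_def Let_def)

lemma cum_est_eq_path_sum: "cum_est hs j = path_sum (\<lambda>h k. est h k j) hs"
  by (induction hs rule: rev_induct) (simp_all add: cum_est_snoc, simp add: cum_est_def)

lemma potential_Nil: "potential [] = ln N"
  by (simp add: potential_def cum_est_def)

lemma potential_snoc:
  "k < N \<Longrightarrow> potential (h @ [k]) \<le> potential h - eta * loss h k + eta * overhead h k"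
  using exaul_round.log_weight_step[OF round_at p_eq eta_eq]
  by (simp add: potential_def cum_est_snoc)

lemma potential_ge:
  assumes "j < N"
  shows "- eta * cum_est hs j \<le> potential hs"
proof -
  have "exp (- eta * cum_est hs j) \<le> (\<Sum>i<N. exp (- eta * cum_est hs i))"
    using assms by (intro member_le_sum) auto
  then have "ln (exp (- eta * cum_est hs j)) \<le> potential hs"
    unfolding potential_def by (rule ln_mono) simp
  then show ?thesis by simp
qed

lemma learner_loss_le:
  assumes "set hs \<subseteq> {..<N}" "j < N"
  shows "path_sum loss hs \<le> ln N / eta + path_sum (\<lambda>h k. est h k j) hs + path_sum overhead hs"
proof -
  have "potential hs \<le> ln N - eta * path_sum loss hs + eta * path_sum overhead hs"
    using assms(1)
  proof (induction hs rule: rev_induct)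
    case (snoc k h)
    then show ?case using potential_snoc[of k h] by (simp add: algebra_simps)
  qed (simp add: potential_Nil)
  then have "eta * path_sum loss hs \<le> eta * (ln N / eta + cum_est hs j + path_sum overhead hs)"
    using potential_ge[OF assms(2), of hs] eta_pos by (simp add: algebra_simps)
  then show ?thesis
    using eta_pos by (simp add: cum_est_eq_path_sum)
qed

text \<open>Index \<open>N - 1\<close> is the threshold 1, which abstains on every score.\<close>

definition comparator_dev :: "nat list \<Rightarrow> real" where
  "comparator_dev = path_sum (\<lambda>h k. 2 * gam * (est h k (N - 1) - loss h (N - 1)))"

definition overhead_dev :: "nat list \<Rightarrow> real" where
  "overhead_dev = path_sum (\<lambda>h k. overhead h k - 4 * gam)"

lemma exp_supermartingale_comparator_dev: "exp_supermartingale N p comparator_dev"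
  using exaul_round.est_loss_exp_moment[OF round_at, of "N - 1"] N_ge_2
  by (simp add: exp_supermartingale_def comparator_dev_def)

lemma exp_supermartingale_overhead_dev: "exp_supermartingale N p overhead_dev"
  using exaul_round.overhead_exp_moment[OF round_at]
  by (simp add: exp_supermartingale_def overhead_dev_def)

lemma loss_regret_le:
  assumes "set hs \<subseteq> {..<N}" "comparator_dev hs \<le> c" "overhead_dev hs \<le> c"
  shows "path_sum loss hs - path_sum (\<lambda>h k. loss h (N - 1)) hs
    \<le> ln N / eta + 2 * eta * length hs + c + c / eta"
proof -
  have "eta * (path_sum (\<lambda>h k. est h k (N - 1)) hs - path_sum (\<lambda>h k. loss h (N - 1)) hs) \<le> c"
    using assms(2)
    by (simp add: comparator_dev_def path_sum_def sum_subtractf sum_distrib_left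
        right_diff_distrib flip: eta_eq)
  then have "path_sum (\<lambda>h k. est h k (N - 1)) hs \<le> path_sum (\<lambda>h k. loss h (N - 1)) hs + c / eta"
    using eta_pos by (simp add: field_simps)
  moreover have "path_sum overhead hs - length hs * (4 * gam) \<le> c"
    using assms(3) by (simp add: overhead_dev_def path_sum_def sum_subtractf)
  moreover have "path_sum loss hs
      \<le> ln N / eta + path_sum (\<lambda>h k. est h k (N - 1)) hs + path_sum overhead hs"
    using N_ge_2 by (intro learner_loss_le[OF assms(1)]) simp
  moreover have "length hs * (4 * gam) = 2 * eta * length hs"
    using eta_eq by simp
  ultimately show ?thesis by linarith
qed

lemma fdr_regret_eq:
  assumes "hs \<noteq> []" "0 < lam"
  defines "T \<equiv> real (length hs)"
  shows "fdr_regret N alpha adv hs / T = (1 - ineff N adv hs) / lam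
    + (1 + 1 / lam) * ((path_sum loss hs - path_sum (\<lambda>h k. loss h (N - 1)) hs) / T)"
proof -
  define D where "D = path_sum loss hs - path_sum (\<lambda>h k. loss h (N - 1)) hs"
  have T: "0 < T" using assms by (simp add: T_def)
  let ?ans = "\<lambda>t. if grid N (hs ! t) \<le> score (take t hs) then 1 else 0"
  have "(1 + lam) * D
      = (\<Sum>t<length hs. (1 + lam) * (loss (take t hs) (hs ! t) - loss (take t hs) (N - 1)))"
    by (simp add: D_def path_sum_def right_diff_distrib sum_distrib_left sum_subtractf)
  also have "\<dots> = (\<Sum>t<length hs. (if score (take t hs) < grid N (hs ! t) then 1 else 0) - 1
      + lam * (?ans t * feedback (take t hs) - alpha * ?ans t))"
    using tot_loss_minus_abstain score_range lam_nonneg grid_last[OF N_ge_2]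
    by (intro sum.cong) (simp_all add: abst_loss_def)
  also have "\<dots> = ineff N adv hs * T - T + lam * fdr_regret N alpha adv hs"
    using T by (simp add: ineff_def fdr_regret_def Let_def T_def sum.distrib sum_subtractf
        sum_distrib_left right_diff_distrib)
  finally have "lam * fdr_regret N alpha adv hs = T - ineff N adv hs * T + (1 + lam) * D"
    by linarith
  then have R: "fdr_regret N alpha adv hs = (T - ineff N adv hs * T + (1 + lam) * D) / lam"
    using assms(2) by (metis nonzero_mult_div_cancel_left less_irrefl)
  show ?thesis
    unfolding R D_def[symmetric] using T assms(2) by (simp add: field_simps)
qed

lemma fdr_regret_bound:
  assumes hs: "set hs \<subseteq> {..<N}" "length hs = T" and T: "1 \<le> T"
    and lam: "lam = sqrt T" and eta: "eta = sqrt (ln N / T)"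
    and devs: "comparator_dev hs \<le> c" "overhead_dev hs \<le> c"
  shows "fdr_regret N alpha adv hs / T \<le> (1 - ineff N adv hs) / sqrt T
    + (1 + 1 / sqrt T) * (4 * sqrt (ln N / T) + (1 / T + sqrt (1 / (T * ln N))) * c)"
proof -
  define D where "D = path_sum loss hs - path_sum (\<lambda>h k. loss h (N - 1)) hs"
  have T_pos: "0 < real T" using T by simp
  have lnN: "0 < ln N" using N_ge_2 by simp
  note eta_eqs = learning_rate_eqs[OF lnN T_pos, folded eta]
  have "c / eta = (1 / eta) * c" by simp
  also have "\<dots> = T * sqrt (1 / (T * ln N)) * c" by (simp only: eta_eqs(2))
  finally have "D \<le> eta * T + 2 * eta * T + c + T * sqrt (1 / (T * ln N)) * c"
    unfolding D_def using loss_regret_le[OF hs(1) devs, unfolded hs(2)] eta_eqs(1) by linarith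
  then have "D / T \<le> (eta * T + 2 * eta * T + c + T * sqrt (1 / (T * ln N)) * c) / T"
    using T_pos by (intro divide_right_mono) auto
  also have "\<dots> = 3 * eta + (1 / T + sqrt (1 / (T * ln N))) * c"
    using T_pos by (simp add: field_simps)
  also have "\<dots> \<le> 4 * eta + (1 / T + sqrt (1 / (T * ln N))) * c"
    using eta_pos by simp
  finally have D_le: "D / T \<le> 4 * eta + (1 / T + sqrt (1 / (T * ln N))) * c" .
  have "hs \<noteq> []" "0 < lam" using hs(2) T lam by auto
  then have "fdr_regret N alpha adv hs / T = (1 - ineff N adv hs) / lam + (1 + 1 / lam) * (D / T)"
    using fdr_regret_eq[of hs] hs(2) by (simp add: D_def)
  also have "\<dots> \<le> (1 - ineff N adv hs) / lam
      + (1 + 1 / lam) * (4 * eta + (1 / T + sqrt (1 / (T * ln N))) * c)"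
    using D_le lam by (intro add_left_mono mult_left_mono) auto
  finally show ?thesis by (simp add: lam eta)
qed

end

theorem theorem1:
  fixes T N :: nat and alpha delta :: real and adv :: "real list \<Rightarrow> real \<times> real"
  assumes "T \<ge> 1"
    and "0 < alpha" "alpha < 1"
    and "0 < delta" "delta < 1"
    and "N \<ge> 2"
    and "\<And>hs. 0 \<le> fst (adv hs) \<and> fst (adv hs) < 1"
    and "\<And>hs. 0 \<le> snd (adv hs) \<and> snd (adv hs) \<le> 1"
  shows "exaul_prob N (sqrt T) alpha (sqrt (ln N / T)) (sqrt (ln N / T) / 2) adv T
           (\<lambda>hs. fdr_regret N alpha adv hs / T
                 \<le> (1 - ineff N adv hs) / sqrt T
                   + (1 + 1 / sqrt T) * (4 * sqrt (ln N / T)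
                      + (1 / T + sqrt (1 / (T * ln N))) * ln (2 / delta)))
         \<ge> 1 - delta"
proof -
  interpret exaul_run N "sqrt T" alpha "sqrt (ln N / T)" "sqrt (ln N / T) / 2" adv
    using assms by unfold_locales auto
  have "1 - delta = 1 - 2 * exp (- ln (2 / delta))"
    using assms(4) by (simp add: exp_minus)
  also have "\<dots> \<le> exaul_prob N (sqrt T) alpha (sqrt (ln N / T)) (sqrt (ln N / T) / 2) adv T
           (\<lambda>hs. fdr_regret N alpha adv hs / T
                 \<le> (1 - ineff N adv hs) / sqrt T
                   + (1 + 1 / sqrt T) * (4 * sqrt (ln N / T)
                      + (1 / T + sqrt (1 / (T * ln N))) * ln (2 / delta)))"
    unfolding exaul_prob_eq_seq_expect
    using assms(1)
    by (intro sampling_kernel.seq_expect_indicator_ge_union_bound[OF sampling_kernel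
          exp_supermartingale_comparator_dev exp_supermartingale_overhead_dev] fdr_regret_bound)
      (auto simp: comparator_dev_def overhead_dev_def)
  finally show ?thesis .
qed

end
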